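(* Let $N\ge1$, constants $\kappa,\epsilon,\sigma_B,\sigma_E,G,\Upsilon>0$, and $p_{1,B}\ge p_{2,B}\ge\dots\ge p_{N,B}>0$ (sorted in descending order). Consider the binary program $$\max_{\boldsymbol a\in\{0,1\}^N}\ \sum_{n=1}^N a_np_{n,B}\quad\text{s.t.}\quad \frac{2\kappa a_np_{n,B}}{\sqrt{\sigma_B}}\le\epsilon\ \ \forall n,\qquad \frac{G\sqrt{\sigma_E}}{\big(\sum_{n=1}^N a_n\big)\max_n\{a_np_{n,B}\}}\ge\sqrt{\Upsilon}.$$ Assume $p_{i,B}$ is the largest entry of $(p_{1,B},\dots,p_{N,B})$ satisfying $\frac{2\kappa p_{i,B}}{\sqrt{\sigma_B}}\le\epsilon$. For $1\le x\le N-i+1$ let $K_x=\min\big\{N-i-x+2,\ \big\lfloor\frac{G\sqrt{\sigma_E}}{p_{i+x-1,B}\sqrt{\Upsilon}}\big\rfloor\big\}$ and define $\boldsymbol a^x\in\{0,1\}^N$ by $[\boldsymbol a^x]_n=1$ if $i+x-1\le n\le i+x+K_x-2$ and $[\boldsymbol a^x]_n=0$ otherwise. Then the only candidates for a globally optimal solution of the program are the $N-i+1$ vectors $\boldsymbol a^1,\dots,\boldsymbol a^{N-i+1}$.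
   Context: This program arises in the paper as the high-model-dimension ($d\to\infty$) limit of a device-selection problem: $a_n=1$ means device $n$ uploads its gradient, $a_n=0$ means it acts as a jammer; $p_{n,B}$ is channel gain times square root of power budget, $\kappa=\sqrt{2\ln(1.25/\zeta)}$ is a privacy constant, $\epsilon$ a differential-privacy level, $\Upsilon$ a security requirement, $\sigma_B,\sigma_E$ noise variances at the server and eavesdropper, and $G$ a gradient-norm bound. *)

theory Defs
  imports Complex_Main
begin

text \<open>Vectors a in {0,1}^N are functions nat => real, only indices 1..N matter.\<close>

definition objective :: "nat \<Rightarrow> (nat \<Rightarrow> real) \<Rightarrow> (nat \<Rightarrow> real) \<Rightarrow> real" where
  "objective N p a = (\<Sum>n=1..N. a n * p n)"

text \<open>Security constraint G sqrt(sigma_E) / ((sum a) * max(a p)) >= sqrt Upsilon;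
  when the denominator is 0 (a = 0) the ratio is +infinity and the constraint holds.\<close>
definition feasible ::
  "nat \<Rightarrow> (nat \<Rightarrow> real) \<Rightarrow> real \<Rightarrow> real \<Rightarrow> real \<Rightarrow> real \<Rightarrow> real \<Rightarrow> real \<Rightarrow> (nat \<Rightarrow> real) \<Rightarrow> bool" where
  "feasible N p \<kappa> \<epsilon> \<sigma>B \<sigma>E G \<Upsilon> a \<longleftrightarrow>
     (\<forall>n\<in>{1..N}. a n \<in> {0, 1}) \<and>
     (\<forall>n\<in>{1..N}. 2 * \<kappa> * a n * p n / sqrt \<sigma>B \<le> \<epsilon>) \<and>
     (let D = (\<Sum>n=1..N. a n) * Max ((\<lambda>n. a n * p n) ` {1..N})
      in D = 0 \<or> G * sqrt \<sigma>E / D \<ge> sqrt \<Upsilon>)"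

definition optimal ::
  "nat \<Rightarrow> (nat \<Rightarrow> real) \<Rightarrow> real \<Rightarrow> real \<Rightarrow> real \<Rightarrow> real \<Rightarrow> real \<Rightarrow> real \<Rightarrow> (nat \<Rightarrow> real) \<Rightarrow> bool" where
  "optimal N p \<kappa> \<epsilon> \<sigma>B \<sigma>E G \<Upsilon> a \<longleftrightarrow>
     feasible N p \<kappa> \<epsilon> \<sigma>B \<sigma>E G \<Upsilon> a \<and>
     (\<forall>b. feasible N p \<kappa> \<epsilon> \<sigma>B \<sigma>E G \<Upsilon> b \<longrightarrow> objective N p b \<le> objective N p a)"

definition Kx :: "nat \<Rightarrow> (nat \<Rightarrow> real) \<Rightarrow> real \<Rightarrow> real \<Rightarrow> real \<Rightarrow> nat \<Rightarrow> nat \<Rightarrow> int" where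
  "Kx N p \<sigma>E G \<Upsilon> i x =
     min (int N - int i - int x + 2) \<lfloor>G * sqrt \<sigma>E / (p (i + x - 1) * sqrt \<Upsilon>)\<rfloor>"

definition ax :: "nat \<Rightarrow> (nat \<Rightarrow> real) \<Rightarrow> real \<Rightarrow> real \<Rightarrow> real \<Rightarrow> nat \<Rightarrow> nat \<Rightarrow> (nat \<Rightarrow> real)" where
  "ax N p \<sigma>E G \<Upsilon> i x = (\<lambda>n.
     if int i + int x - 1 \<le> int n \<and> int n \<le> int i + int x + Kx N p \<sigma>E G \<Upsilon> i x - 2 then 1 else 0)"

end

theory Submission
  imports Defs
begin

text \<open>Only the support \<open>S\<close> of a 0/1 selection matters: the objective is \<open>\<Sum>n\<in>S. p n\<close>,
  privacy constrains each selected device separately, and, \<open>p\<close> being decreasing, the security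
  constraint says that \<open>card S\<close> is at most the budget \<open>\<lfloor>G \<surd>\<sigma>\<^sub>E / (p\<^sub>m \<surd>\<Upsilon>)\<rfloor>\<close> of the first
  selected device \<open>m\<close>. Privacy forces \<open>m \<ge> i\<close>. Again because \<open>p\<close> is decreasing, the \<open>card S\<close>
  consecutive devices starting at \<open>m\<close> earn at least as much as \<open>S\<close>, and they lie in the window
  \<open>a\<^sup>x\<close>, \<open>x = m - i + 1\<close>, which is feasible and as long as the budget of \<open>m\<close> and the bound \<open>N\<close>
  allow. So every feasible selection is dominated by one of the finitely many candidates.\<close>

lemma sum_antitone_le_initial_interval:
  fixes p :: "nat \<Rightarrow> 'a::ordered_comm_monoid_add"
  assumes antitone: "\<And>a b. m \<le> a \<Longrightarrow> a \<le> b \<Longrightarrow> b \<le> N \<Longrightarrow> p b \<le> p a"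
    and "finite S" "S \<subseteq> {m..N}"
  shows "sum p S \<le> sum p {m..<m + card S}"
  using assms(2,3)
proof (induction "card S" arbitrary: S)
  case 0
  then show ?case by simp
next
  case (Suc k)
  define t where "t = Max S"
  have "S \<noteq> {}" using Suc.hyps(2) by auto
  then have t: "t \<in> S" using Suc.prems t_def by simp
  have "S \<subseteq> {m..t}" using Suc.prems by (auto simp: t_def)
  then have "Suc k \<le> card {m..t}" using card_mono[of "{m..t}" S] Suc.hyps(2) by simp
  then have "p t \<le> p (m + k)" using antitone t Suc.prems(2) by auto
  moreover have "card (S - {t}) = k" using Suc.hyps(2) t by simp
  then have "sum p (S - {t}) \<le> sum p {m..<m + k}"
    using Suc.hyps(1)[of "S - {t}"] Suc.prems by auto
  ultimately have "sum p S \<le> p (m + k) + sum p {m..<m + k}"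
    unfolding sum.remove[OF Suc.prems(1) t] by (rule add_mono)
  also have "\<dots> = sum p {m..<m + card S}"
    using Suc.hyps(2)[symmetric] by (simp add: add.commute)
  finally show ?case .
qed

lemma ex_optimal_among_dominating_candidates:
  fixes f :: "'b \<Rightarrow> 'c::linorder"
  assumes "finite X" "X \<noteq> {}"
    and "\<forall>x\<in>X. P (c x)"
    and dominated: "\<And>b. P b \<Longrightarrow> \<exists>x\<in>X. f b \<le> f (c x)"
  shows "\<exists>x\<in>X. P (c x) \<and> (\<forall>b. P b \<longrightarrow> f b \<le> f (c x))"
proof -
  obtain x0 where x0: "x0 \<in> X" "f (c x0) = Max ((\<lambda>x. f (c x)) ` X)"
    using Max_in[of "(\<lambda>x. f (c x)) ` X"] assms(1,2) by fastforce
  have "f b \<le> f (c x0)" if "P b" for b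
    using dominated[OF that] x0 assms(1) by (auto intro: order.trans)
  then show ?thesis using x0(1) assms(3) by blast
qed

definition support :: "nat \<Rightarrow> (nat \<Rightarrow> real) \<Rightarrow> nat set" where
  "support N a = {n\<in>{1..N}. a n = 1}"

lemma finite_support [simp]: "finite (support N a)"
  by (simp add: support_def)

lemma support_subset: "support N a \<subseteq> {1..N}"
  by (auto simp: support_def)

lemma binary_eq_indicator_support:
  assumes "\<forall>n\<in>{1..N}. a n \<in> {0, 1}" "n \<in> {1..N}"
  shows "a n = of_bool (n \<in> support N a)"
  using assms by (auto simp: support_def)

lemma sum_binary_eq_card_support:
  assumes "\<forall>n\<in>{1..N}. a n \<in> {0, 1}"
  shows "(\<Sum>n=1..N. a n) = real (card (support N a))"
proof -
  have "(\<Sum>n=1..N. a n) = (\<Sum>n=1..N. of_bool (n \<in> support N a))"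
    using binary_eq_indicator_support[OF assms] by (intro sum.cong) auto
  also have "\<dots> = real (card (support N a))"
    using support_subset[of N a] by (simp add: sum.inter_restrict Int_absorb1)
  finally show ?thesis .
qed

lemma objective_binary_eq_sum_support:
  assumes "\<forall>n\<in>{1..N}. a n \<in> {0, 1}"
  shows "objective N p a = sum p (support N a)"
proof -
  have "objective N p a = (\<Sum>n=1..N. if n \<in> support N a then p n else 0)"
    unfolding objective_def using binary_eq_indicator_support[OF assms] by (intro sum.cong) auto
  also have "\<dots> = sum p ({1..N} \<inter> support N a)"
    by (rule sum.inter_restrict[symmetric]) simp
  also have "\<dots> = sum p (support N a)"
    using support_subset[of N a] by (simp only: Int_absorb1)
  finally show ?thesis .
qed

lemma Max_binary_weights_eq:
  assumes "\<forall>n\<in>{1..N}. a n \<in> {0, 1}"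
    and sorted: "\<And>m n. 1 \<le> m \<Longrightarrow> m \<le> n \<Longrightarrow> n \<le> N \<Longrightarrow> p n \<le> p m"
    and pos: "\<And>n. n \<in> {1..N} \<Longrightarrow> p n > 0"
    and "support N a \<noteq> {}"
  shows "Max ((\<lambda>n. a n * p n) ` {1..N}) = p (Min (support N a))"
proof (rule Max_eqI)
  let ?m = "Min (support N a)"
  have m: "?m \<in> support N a" using assms(4) by simp
  then show "p ?m \<in> (\<lambda>n. a n * p n) ` {1..N}"
    by (auto simp: support_def intro!: image_eqI[of _ _ ?m])
  fix y assume "y \<in> (\<lambda>n. a n * p n) ` {1..N}"
  then obtain n where n: "n \<in> {1..N}" "y = a n * p n" by auto
  have m1: "?m \<in> {1..N}" using m support_subset by blast
  show "y \<le> p ?m"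
  proof (cases "n \<in> support N a")
    case True
    then have "?m \<le> n" by simp
    then have "p n \<le> p ?m" using sorted[of ?m n] n(1) m1 by simp
    then show ?thesis using n binary_eq_indicator_support[OF assms(1) n(1)] True by simp
  next
    case False
    then show ?thesis
      using n pos[OF m1] binary_eq_indicator_support[OF assms(1) n(1)] by simp
  qed
qed simp

definition security_budget :: "(nat \<Rightarrow> real) \<Rightarrow> real \<Rightarrow> real \<Rightarrow> real \<Rightarrow> nat \<Rightarrow> int" where
  "security_budget p \<sigma>E G \<Upsilon> m = \<lfloor>G * sqrt \<sigma>E / (p m * sqrt \<Upsilon>)\<rfloor>"

locale device_selection =
  fixes N :: nat and p :: "nat \<Rightarrow> real" and \<kappa> \<epsilon> \<sigma>B \<sigma>E G \<Upsilon> :: real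
  assumes \<kappa>_pos: "\<kappa> > 0" and \<epsilon>_pos: "\<epsilon> > 0" and \<sigma>B_pos: "\<sigma>B > 0"
    and \<sigma>E_pos: "\<sigma>E > 0" and G_pos: "G > 0" and \<Upsilon>_pos: "\<Upsilon> > 0"
    and sorted: "\<And>m n. 1 \<le> m \<Longrightarrow> m \<le> n \<Longrightarrow> n \<le> N \<Longrightarrow> p n \<le> p m"
    and pos: "\<And>n. n \<in> {1..N} \<Longrightarrow> p n > 0"
begin

lemma security_budget_nonneg: "m \<in> {1..N} \<Longrightarrow> 0 \<le> security_budget p \<sigma>E G \<Upsilon> m"
  using pos[of m] G_pos \<sigma>E_pos \<Upsilon>_pos by (simp add: security_budget_def)

lemma privacy_iff_support:
  assumes "\<forall>n\<in>{1..N}. a n \<in> {0, 1}"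
  shows "(\<forall>n\<in>{1..N}. 2 * \<kappa> * a n * p n / sqrt \<sigma>B \<le> \<epsilon>) \<longleftrightarrow>
         (\<forall>n\<in>support N a. 2 * \<kappa> * p n / sqrt \<sigma>B \<le> \<epsilon>)"
proof -
  have eq: "2 * \<kappa> * a n * p n / sqrt \<sigma>B = (if n \<in> support N a then 2 * \<kappa> * p n / sqrt \<sigma>B else 0)"
    if "n \<in> {1..N}" for n
    using binary_eq_indicator_support[OF assms that] by simp
  show ?thesis
  proof
    assume H: "\<forall>n\<in>{1..N}. 2 * \<kappa> * a n * p n / sqrt \<sigma>B \<le> \<epsilon>"
    show "\<forall>n\<in>support N a. 2 * \<kappa> * p n / sqrt \<sigma>B \<le> \<epsilon>"
    proof
      fix n assume n: "n \<in> support N a"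
      then have n1: "n \<in> {1..N}" using support_subset by blast
      show "2 * \<kappa> * p n / sqrt \<sigma>B \<le> \<epsilon>" using H[rule_format, OF n1] eq[OF n1] n by simp
    qed
  next
    assume H: "\<forall>n\<in>support N a. 2 * \<kappa> * p n / sqrt \<sigma>B \<le> \<epsilon>"
    show "\<forall>n\<in>{1..N}. 2 * \<kappa> * a n * p n / sqrt \<sigma>B \<le> \<epsilon>"
      using H eq \<epsilon>_pos by simp
  qed
qed

lemma security_iff_card_le_budget:
  assumes bin: "\<forall>n\<in>{1..N}. a n \<in> {0, 1}"
  shows "(let D = (\<Sum>n=1..N. a n) * Max ((\<lambda>n. a n * p n) ` {1..N})
          in D = 0 \<or> G * sqrt \<sigma>E / D \<ge> sqrt \<Upsilon>) \<longleftrightarrow>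
         (support N a \<noteq> {} \<longrightarrow>
          int (card (support N a)) \<le> security_budget p \<sigma>E G \<Upsilon> (Min (support N a)))"
proof (cases "support N a = {}")
  case True
  then show ?thesis using sum_binary_eq_card_support[OF bin] by simp
next
  case False
  define S where "S = support N a"
  define m where "m = Min S"
  have "m \<in> support N a" using False unfolding S_def m_def by simp
  then have pm: "p m > 0" using pos support_subset by blast
  have c: "real (card S) > 0" using False unfolding S_def by (simp add: card_gt_0_iff)
  have D: "(\<Sum>n=1..N. a n) * Max ((\<lambda>n. a n * p n) ` {1..N}) = real (card S) * p m"
    using sum_binary_eq_card_support[OF bin] Max_binary_weights_eq[OF bin sorted pos False]
    unfolding S_def m_def by simp
  have "sqrt \<Upsilon> \<le> G * sqrt \<sigma>E / (real (card S) * p m) \<longleftrightarrow>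
        sqrt \<Upsilon> * (real (card S) * p m) \<le> G * sqrt \<sigma>E"
    using c pm by (simp add: pos_le_divide_eq)
  also have "\<dots> \<longleftrightarrow> real (card S) * (p m * sqrt \<Upsilon>) \<le> G * sqrt \<sigma>E"
    by (simp add: mult_ac)
  also have "\<dots> \<longleftrightarrow> real (card S) \<le> G * sqrt \<sigma>E / (p m * sqrt \<Upsilon>)"
    using pm \<Upsilon>_pos by (simp add: pos_le_divide_eq)
  also have "\<dots> \<longleftrightarrow> int (card S) \<le> security_budget p \<sigma>E G \<Upsilon> m"
    by (simp add: security_budget_def le_floor_iff)
  finally show ?thesis
    using D c pm False unfolding S_def m_def by (simp add: Let_def)
qed

lemma feasible_iff:
  "feasible N p \<kappa> \<epsilon> \<sigma>B \<sigma>E G \<Upsilon> a \<longleftrightarrow>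
     (\<forall>n\<in>{1..N}. a n \<in> {0, 1}) \<and>
     (\<forall>n\<in>support N a. 2 * \<kappa> * p n / sqrt \<sigma>B \<le> \<epsilon>) \<and>
     (support N a \<noteq> {} \<longrightarrow>
      int (card (support N a)) \<le> security_budget p \<sigma>E G \<Upsilon> (Min (support N a)))"
  unfolding feasible_def using privacy_iff_support security_iff_card_le_budget by blast

end

locale device_selection_threshold = device_selection +
  fixes i :: nat
  assumes i: "i \<in> {1..N}"
    and privacy_i: "2 * \<kappa> * p i / sqrt \<sigma>B \<le> \<epsilon>"
    and first: "\<And>n. n \<in> {1..<i} \<Longrightarrow> \<not> (2 * \<kappa> * p n / sqrt \<sigma>B \<le> \<epsilon>)"
begin

abbreviation candidate :: "nat \<Rightarrow> nat \<Rightarrow> real" where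
  "candidate x \<equiv> ax N p \<sigma>E G \<Upsilon> i x"

lemma Kx_bounds:
  assumes "x \<in> {1..N - i + 1}"
  shows "0 \<le> Kx N p \<sigma>E G \<Upsilon> i x"
    and "Kx N p \<sigma>E G \<Upsilon> i x \<le> int N + 1 - int (i + x - 1)"
    and "Kx N p \<sigma>E G \<Upsilon> i x \<le> security_budget p \<sigma>E G \<Upsilon> (i + x - 1)"
proof -
  have "i + x - 1 \<in> {1..N}" using assms i by auto
  then show "0 \<le> Kx N p \<sigma>E G \<Upsilon> i x"
    using security_budget_nonneg assms by (auto simp: Kx_def security_budget_def)
  show "Kx N p \<sigma>E G \<Upsilon> i x \<le> int N + 1 - int (i + x - 1)"
    using assms i by (auto simp: Kx_def)
  show "Kx N p \<sigma>E G \<Upsilon> i x \<le> security_budget p \<sigma>E G \<Upsilon> (i + x - 1)"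
    by (simp add: Kx_def security_budget_def)
qed

lemma support_candidate:
  assumes "x \<in> {1..N - i + 1}"
  shows "support N (candidate x) = {i + x - 1..<i + x - 1 + nat (Kx N p \<sigma>E G \<Upsilon> i x)}"
  using Kx_bounds[OF assms] assms i by (auto simp: support_def ax_def)

lemma binary_candidate: "\<forall>n\<in>{1..N}. candidate x n \<in> {0, 1}"
  by (simp add: ax_def)

lemma feasible_candidate:
  assumes x: "x \<in> {1..N - i + 1}"
  shows "feasible N p \<kappa> \<epsilon> \<sigma>B \<sigma>E G \<Upsilon> (candidate x)"
  unfolding feasible_iff
proof (intro conjI binary_candidate ballI impI)
  fix n assume n: "n \<in> support N (candidate x)"
  then have "n \<le> N" by (simp add: support_def)
  moreover have "i \<le> n" using n support_candidate[OF x] x by auto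
  ultimately have "p n \<le> p i" using sorted i by simp
  then have "2 * \<kappa> * p n / sqrt \<sigma>B \<le> 2 * \<kappa> * p i / sqrt \<sigma>B"
    using \<kappa>_pos \<sigma>B_pos by (simp add: divide_right_mono)
  then show "2 * \<kappa> * p n / sqrt \<sigma>B \<le> \<epsilon>" using privacy_i by linarith
next
  assume "support N (candidate x) \<noteq> {}"
  then have "Min (support N (candidate x)) = i + x - 1"
    using support_candidate[OF x] by (auto intro: Min_eqI)
  then show "int (card (support N (candidate x)))
      \<le> security_budget p \<sigma>E G \<Upsilon> (Min (support N (candidate x)))"
    using support_candidate[OF x] Kx_bounds[OF x] by simp
qed

lemma objective_candidate_nonneg: "0 \<le> objective N p (candidate x)"
  unfolding objective_binary_eq_sum_support[OF binary_candidate]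
  using pos by (intro sum_nonneg) (auto simp: support_def less_imp_le)

lemma feasible_dominated_by_candidate:
  assumes "feasible N p \<kappa> \<epsilon> \<sigma>B \<sigma>E G \<Upsilon> b"
  shows "\<exists>x\<in>{1..N - i + 1}. objective N p b \<le> objective N p (candidate x)"
proof (cases "support N b = {}")
  case True
  then show ?thesis
    using assms i objective_candidate_nonneg[of 1]
    by (force simp: feasible_iff objective_binary_eq_sum_support)
next
  case False
  define S where "S = support N b"
  define m where "m = Min S"
  have bin: "\<forall>n\<in>{1..N}. b n \<in> {0, 1}"
    and privacy: "\<forall>n\<in>S. 2 * \<kappa> * p n / sqrt \<sigma>B \<le> \<epsilon>"
    and budget: "int (card S) \<le> security_budget p \<sigma>E G \<Upsilon> m"
    using assms False by (simp_all add: feasible_iff S_def m_def)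
  have m: "m \<in> S" using False by (simp add: S_def m_def)
  then have "m \<in> {1..N}" by (simp add: S_def support_def)
  moreover have "i \<le> m" using first privacy m \<open>m \<in> {1..N}\<close> by force
  ultimately obtain x where x: "x \<in> {1..N - i + 1}" "i + x - 1 = m"
    by (intro that[of "m - i + 1"]) auto
  have S_sub: "S \<subseteq> {m..N}"
  proof
    fix n assume "n \<in> S"
    then show "n \<in> {m..N}" by (simp add: m_def S_def support_def)
  qed
  have "card S \<le> card {m..N}" using S_sub by (intro card_mono) auto
  then have "card S \<le> nat (Kx N p \<sigma>E G \<Upsilon> i x)"
    using budget x(2) \<open>m \<in> {1..N}\<close> by (simp add: Kx_def security_budget_def)
  then have window: "{m..<m + card S} \<subseteq> support N (candidate x)"
    using support_candidate[OF x(1)] x(2) by auto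
  have "objective N p b = sum p S"
    using objective_binary_eq_sum_support[OF bin] by (simp add: S_def)
  also have "\<dots> \<le> sum p {m..<m + card S}"
  proof (rule sum_antitone_le_initial_interval[OF _ _ S_sub])
    show "p b \<le> p a" if "m \<le> a" "a \<le> b" "b \<le> N" for a b
      using that sorted \<open>m \<in> {1..N}\<close> by simp
  qed (simp add: S_def)
  also have "\<dots> \<le> sum p (support N (candidate x))"
    using window pos by (intro sum_mono2) (auto simp: support_def less_imp_le)
  also have "\<dots> = objective N p (candidate x)"
    using objective_binary_eq_sum_support[OF binary_candidate] by simp
  finally show ?thesis using x(1) by blast
qed

end

theorem lemma6:
  fixes N i :: nat and p :: "nat \<Rightarrow> real" and \<kappa> \<epsilon> \<sigma>B \<sigma>E G \<Upsilon> :: real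
  assumes "N \<ge> 1"
    and "\<kappa> > 0" "\<epsilon> > 0" "\<sigma>B > 0" "\<sigma>E > 0" "G > 0" "\<Upsilon> > 0"
    and sorted: "\<And>m n. 1 \<le> m \<Longrightarrow> m \<le> n \<Longrightarrow> n \<le> N \<Longrightarrow> p n \<le> p m"
    and pos: "\<And>n. n \<in> {1..N} \<Longrightarrow> p n > 0"
    and i: "i \<in> {1..N}"
    and priv_i: "2 * \<kappa> * p i / sqrt \<sigma>B \<le> \<epsilon>"
    and largest: "\<And>n. n \<in> {1..N} \<Longrightarrow> 2 * \<kappa> * p n / sqrt \<sigma>B \<le> \<epsilon> \<Longrightarrow> p n \<le> p i"
    and first: "\<And>n. n \<in> {1..<i} \<Longrightarrow> \<not> (2 * \<kappa> * p n / sqrt \<sigma>B \<le> \<epsilon>)"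
  shows "(\<forall>x\<in>{1..N - i + 1}. feasible N p \<kappa> \<epsilon> \<sigma>B \<sigma>E G \<Upsilon> (ax N p \<sigma>E G \<Upsilon> i x)) \<and>
         (\<exists>x\<in>{1..N - i + 1}. optimal N p \<kappa> \<epsilon> \<sigma>B \<sigma>E G \<Upsilon> (ax N p \<sigma>E G \<Upsilon> i x))"
proof -
  interpret device_selection_threshold N p \<kappa> \<epsilon> \<sigma>B \<sigma>E G \<Upsilon> i
    using assms by unfold_locales auto
  have feasible: "\<forall>x\<in>{1..N - i + 1}. feasible N p \<kappa> \<epsilon> \<sigma>B \<sigma>E G \<Upsilon> (candidate x)"
    using feasible_candidate by blast
  have "{1..N - i + 1} \<noteq> {}" using i by auto
  then have "\<exists>x\<in>{1..N - i + 1}. optimal N p \<kappa> \<epsilon> \<sigma>B \<sigma>E G \<Upsilon> (candidate x)"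
    using ex_optimal_among_dominating_candidates[where P = "feasible N p \<kappa> \<epsilon> \<sigma>B \<sigma>E G \<Upsilon>" and c = candidate,
        OF _ _ feasible feasible_dominated_by_candidate]
    by (simp add: optimal_def)
  with feasible show ?thesis by blast
qed

end
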